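(* Let $n\ge 2$, $a,b,c\in\mathbb{Z}_n$, and suppose $(\mathbb{Z}_n,* )$ with $x*y=ax+by+c$ is a quasigroup. Then, for $1\le k<n$, $(\mathbb{Z}_n,* )$ is $k$-translatable with respect to the ordering $0,1,\dots,n-1$ if and only if $a+kb\equiv 0\pmod n$.
   Context: A finite groupoid with ordering $q_1,\dots,q_n$ is $k$-translatable ($1\le k<n$) with respect to this ordering if $q_i* q_j=q_{i-1}* q_{j-k}$ for all $i\in\{2,\dots,n\}$, $j\in\{1,\dots,n\}$, indices taken modulo $n$ in $\{1,\dots,n\}$ (each Cayley-table row is the previous row with its last $k$ entries moved to the front). *)

theory Defs
  imports "HOL-Number_Theory.Cong"
begin

definition quasigroup :: "'a set \<Rightarrow> ('a \<Rightarrow> 'a \<Rightarrow> 'a) \<Rightarrow> bool" where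
  "quasigroup S f \<longleftrightarrow> (\<forall>x\<in>S. \<forall>y\<in>S. f x y \<in> S) \<and>
     (\<forall>u\<in>S. \<forall>v\<in>S. (\<exists>!x. x \<in> S \<and> f u x = v) \<and> (\<exists>!y. y \<in> S \<and> f y u = v))"

definition idx :: "int \<Rightarrow> int \<Rightarrow> int" where
  "idx n i = (i - 1) mod n + 1"

definition k_translatable :: "int \<Rightarrow> ('a \<Rightarrow> 'a \<Rightarrow> 'a) \<Rightarrow> (int \<Rightarrow> 'a) \<Rightarrow> int \<Rightarrow> bool" where
  "k_translatable n f q k \<longleftrightarrow>
     (\<forall>i\<in>{2..n}. \<forall>j\<in>{1..n}. f (q i) (q j) = f (q (idx n (i - 1))) (q (idx n (j - k))))"

end

theory Submission
  imports Defs
begin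

text \<open>Row i of the Cayley table of x * y = ax + by + c, shifted cyclically by k, is
  x * (y - k); comparing with row i - 1 gives a(x - (x-1)) + b(y - (y-k)) = a + kb \<equiv> 0.\<close>

lemma affine_shift_eq_iff_cong:
  fixes n a b c k x y :: int
  assumes "n > 0"
  shows "(a * x + b * y + c) mod n = (a * (x - 1) + b * ((y - k) mod n) + c) mod n
         \<longleftrightarrow> [a + k * b = 0] (mod n)"
proof -
  define z where "z = a * (x - 1) + b * (y - k) + c"
  have lhs: "a * x + b * y + c = z + (a + k * b)"
    unfolding z_def by (simp add: algebra_simps)
  have "[a * (x - 1) + b * ((y - k) mod n) + c = z] (mod n)"
    unfolding z_def by (intro cong_add cong_mult cong_refl) (simp add: cong_def)
  then have rhs: "(a * (x - 1) + b * ((y - k) mod n) + c) mod n = z mod n"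
    by (simp only: cong_def)
  have "[z + (a + k * b) = z + 0] (mod n) \<longleftrightarrow> [a + k * b = 0] (mod n)"
    by (rule cong_add_lcancel)
  then show ?thesis
    by (simp add: lhs rhs cong_def)
qed

lemma idx_minus_one: "idx n i - 1 = (i - 1) mod n"
  by (simp add: idx_def)

lemma idx_pred_in_range:
  fixes n i :: int
  assumes "i \<in> {2..n}"
  shows "idx n (i - 1) = i - 1"
  using assms by (simp add: idx_def)

theorem lemma9p1:
  fixes n a b c k :: int
  assumes "n \<ge> 2"
    and "a \<in> {0..<n}" and "b \<in> {0..<n}" and "c \<in> {0..<n}"
    and "quasigroup {0..<n} (\<lambda>x y. (a * x + b * y + c) mod n)"
    and "1 \<le> k" and "k < n"
  shows "k_translatable n (\<lambda>x y. (a * x + b * y + c) mod n) (\<lambda>i. i - 1) k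
         \<longleftrightarrow> [a + k * b = 0] (mod n)"
proof -
  have entry_iff: "(a * (i - 1) + b * (j - 1) + c) mod n
      = (a * (idx n (i - 1) - 1) + b * (idx n (j - k) - 1) + c) mod n
      \<longleftrightarrow> [a + k * b = 0] (mod n)" if "i \<in> {2..n}" for i j
    using affine_shift_eq_iff_cong[of n a "i - 1" b "j - 1" c k] assms(1)
    by (simp add: idx_pred_in_range[OF that] idx_minus_one algebra_simps)
  have "(2::int) \<in> {2..n}" and "(1::int) \<in> {1..n}"
    using assms(1) by simp_all
  then show ?thesis
    unfolding k_translatable_def using entry_iff by blast
qed

end
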